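(* Let $X$ be a real Banach space, $f:X\to\mathbb{R}\cup\{+\infty\}$ proper, convex and lsc, and assume $F_{\partial f}(x,x^* ) = f(x)+f^*(x^* )$ for some $(x,x^* )\in\mathrm{dom}\, f\times\mathrm{dom}\, f^*$. Then for every $(a,a^* )\in\mathcal{M}_{\partial f}(x,x^* )$, \[ a^*\in\partial f(x)\cap\partial f(a) \quad\text{and}\quad a\in\partial f^*(x^* )\cap\partial f^*(a^* ). \]
   Context: $f^*$ is the Fenchel conjugate. For a monotone $A:X\rightrightarrows X^*$, $F_A(x,x^* ) = \sup_{(y,y^* )\in\mathrm{Gr}(A)}\{\langle y,x^*\rangle+\langle x,y^*\rangle-\langle y,y^*\rangle\}$ is the Fitzpatrick function and $\mathcal{M}_A(x,x^* ) = \{(a,a^* )\in\mathrm{Gr}(A): F_A(x,x^* ) = \langle x,a^*\rangle + \langle a,x^*\rangle - \langle a,a^*\rangle\}$ is the set of points of the graph attaining this supremum. $\partial f^*(x^* )$ denotes $\{y\in X: f^*(z^* )\ge f^*(x^* )+\langle y, z^*-x^*\rangle\ \forall z^*\}$. *)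

theory Defs
  imports "HOL-Analysis.Analysis" "HOL-Library.Extended_Real"
begin

text \<open>X is a real Banach space ('a::banach); its dual X* is the type of bounded linear functionals;
  the duality pairing is blinfun_apply. Extended-real-valued functions use ereal.\<close>

definition proper_fun :: "('a \<Rightarrow> ereal) \<Rightarrow> bool" where
  "proper_fun f \<longleftrightarrow> (\<forall>x. f x \<noteq> -\<infinity>) \<and> (\<exists>x. f x \<noteq> \<infinity>)"

definition convex_fun :: "('a::real_vector \<Rightarrow> ereal) \<Rightarrow> bool" where
  "convex_fun f \<longleftrightarrow> convex {(x, r::real). f x \<le> ereal r}"

definition lsc_fun :: "('a::topological_space \<Rightarrow> ereal) \<Rightarrow> bool" where
  "lsc_fun f \<longleftrightarrow> (\<forall>c::real. closed {x. f x \<le> ereal c})"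

definition edom :: "('a \<Rightarrow> ereal) \<Rightarrow> 'a set" where
  "edom f = {x. f x < \<infinity>}"

definition fconj :: "('a::real_normed_vector \<Rightarrow> ereal) \<Rightarrow> ('a \<Rightarrow>\<^sub>L real) \<Rightarrow> ereal" where
  "fconj f xs = (SUP x. ereal (blinfun_apply xs x) - f x)"

definition subdiff :: "('a::real_normed_vector \<Rightarrow> ereal) \<Rightarrow> 'a \<Rightarrow> ('a \<Rightarrow>\<^sub>L real) set" where
  "subdiff f x = {xs. f x < \<infinity> \<and> (\<forall>y. f y \<ge> f x + ereal (blinfun_apply xs (y - x)))}"

definition subdiff_conj :: "(('a::real_normed_vector \<Rightarrow>\<^sub>L real) \<Rightarrow> ereal) \<Rightarrow> ('a \<Rightarrow>\<^sub>L real) \<Rightarrow> 'a set" where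
  "subdiff_conj g xs = {y. \<forall>zs. g zs \<ge> g xs + ereal (blinfun_apply (zs - xs) y)}"

definition graph :: "('a \<Rightarrow> 'b set) \<Rightarrow> ('a \<times> 'b) set" where
  "graph A = {(x, xs). xs \<in> A x}"

definition fitzpatrick :: "('a::real_normed_vector \<Rightarrow> ('a \<Rightarrow>\<^sub>L real) set) \<Rightarrow> 'a \<Rightarrow> ('a \<Rightarrow>\<^sub>L real) \<Rightarrow> ereal" where
  "fitzpatrick A x xs = (SUP p\<in>graph A. ereal (blinfun_apply xs (fst p) + blinfun_apply (snd p) x
                                          - blinfun_apply (snd p) (fst p)))"

definition fitz_M :: "('a::real_normed_vector \<Rightarrow> ('a \<Rightarrow>\<^sub>L real) set) \<Rightarrow> 'a \<Rightarrow> ('a \<Rightarrow>\<^sub>L real) \<Rightarrow> ('a \<times> ('a \<Rightarrow>\<^sub>L real)) set" where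
  "fitz_M A x xs = {(a, as) \<in> graph A. fitzpatrick A x xs =
      ereal (blinfun_apply as x + blinfun_apply xs a - blinfun_apply as a)}"

end

theory Submission
  imports Defs
begin

text \<open>Only the Fenchel--Young inequality and its equality case enter the proof. For (a, a*) in the graph of \<partial>f we have
  f(a) + f*(a*) = \<langle>a, a*\<rangle>, so the hypothesis F(x, x*) = f(x) + f*(x*) rewrites to
  [f(x) + f*(a*) - \<langle>x, a*\<rangle>] + [f(a) + f*(x*) - \<langle>a, x*\<rangle>] = 0.
  Both brackets are nonnegative by Fenchel--Young, hence zero, and equality in Fenchel--Young
  yields the remaining subgradient relations.\<close>

lemma fenchel_young: "ereal (blinfun_apply ys y) - f y \<le> fconj f ys"
  unfolding fconj_def by (rule SUP_upper) auto

lemma subdiff_iff_fenchel_young_eq: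
  assumes "f y = ereal r"
  shows "ys \<in> subdiff f y \<longleftrightarrow> fconj f ys = ereal (blinfun_apply ys y - r)"
proof
  assume "ys \<in> subdiff f y"
  then have subgrad: "ereal (r + blinfun_apply ys (z - y)) \<le> f z" for z
    using assms by (auto simp: subdiff_def)
  have "fconj f ys \<le> ereal (blinfun_apply ys y - r)"
    unfolding fconj_def
  proof (rule SUP_least)
    fix z
    show "ereal (blinfun_apply ys z) - f z \<le> ereal (blinfun_apply ys y - r)"
      using subgrad[of z] by (cases "f z") (auto simp: blinfun.diff_right)
  qed
  then show "fconj f ys = ereal (blinfun_apply ys y - r)"
    using fenchel_young[of ys y f] assms by (simp add: antisym)
next
  assume conj_eq: "fconj f ys = ereal (blinfun_apply ys y - r)"
  have "f y + ereal (blinfun_apply ys (z - y)) \<le> f z" for z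
    using fenchel_young[of ys z f] conj_eq assms
    by (cases "f z") (auto simp: blinfun.diff_right)
  then show "ys \<in> subdiff f y"
    using assms by (simp add: subdiff_def)
qed

lemma fenchel_young_eq_imp_subdiff_conj:
  assumes "f y = ereal r" and "fconj f ys = ereal (blinfun_apply ys y - r)"
  shows "y \<in> subdiff_conj (fconj f) ys"
  unfolding subdiff_conj_def
proof safe
  fix zs
  show "fconj f ys + ereal (blinfun_apply (zs - ys) y) \<le> fconj f zs"
    using fenchel_young[of zs y f] assms by (simp add: blinfun.diff_left)
qed

theorem proposition4p1:
  fixes f :: "'a::banach \<Rightarrow> ereal" and x :: 'a and xs :: "'a \<Rightarrow>\<^sub>L real"
  assumes "proper_fun f" and "convex_fun f" and "lsc_fun f"
    and "x \<in> edom f" and "xs \<in> edom (fconj f)"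
    and "fitzpatrick (subdiff f) x xs = f x + fconj f xs"
  shows "\<forall>(a, as) \<in> fitz_M (subdiff f) x xs.
           as \<in> subdiff f x \<inter> subdiff f a \<and>
           a \<in> subdiff_conj (fconj f) xs \<inter> subdiff_conj (fconj f) as"
proof clarify
  fix a as
  assume "(a, as) \<in> fitz_M (subdiff f) x xs"
  then have as_a: "as \<in> subdiff f a" and fitz: "fitzpatrick (subdiff f) x xs =
      ereal (blinfun_apply as x + blinfun_apply xs a - blinfun_apply as a)"
    by (auto simp: fitz_M_def graph_def)
  have not_minf: "f y \<noteq> -\<infinity>" for y
    using assms(1) by (simp add: proper_fun_def)
  obtain fa where fa: "f a = ereal fa"
    using as_a not_minf[of a] by (cases "f a") (auto simp: subdiff_def)
  obtain fx where fx: "f x = ereal fx"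
    using assms(4) not_minf[of x] by (cases "f x") (auto simp: edom_def)
  obtain cx where cx: "fconj f xs = ereal cx"
    using assms(5) fenchel_young[of xs x f] fx by (cases "fconj f xs") (auto simp: edom_def)
  have ca: "fconj f as = ereal (blinfun_apply as a - fa)"
    using as_a subdiff_iff_fenchel_young_eq[where f = f, OF fa] by blast
  have "fx + cx = blinfun_apply as x + blinfun_apply xs a - blinfun_apply as a"
    using assms(6) fitz fx cx by simp
  moreover have "blinfun_apply xs a - fa \<le> cx"
    using fenchel_young[of xs a f] cx fa by simp
  moreover have "blinfun_apply as x - fx \<le> blinfun_apply as a - fa"
    using fenchel_young[of as x f] ca fx by simp
  ultimately have "fconj f xs = ereal (blinfun_apply xs a - fa)"
    and "fconj f as = ereal (blinfun_apply as x - fx)"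
    using ca cx by auto
  then show "as \<in> subdiff f x \<inter> subdiff f a \<and>
      a \<in> subdiff_conj (fconj f) xs \<inter> subdiff_conj (fconj f) as"
    using as_a fa fx ca subdiff_iff_fenchel_young_eq fenchel_young_eq_imp_subdiff_conj
    by blast
qed

end
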